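(* Let $\tau=(\tau,A,a)$ be a primitive substitution and let $u,v$ be non-empty prefixes of $X_\tau$ with $|u|<|v|$. Then there exist an integer $k\geq 1$ and morphisms $\lambda:R_v\to R_u^+$ and $\kappa:R_u\to R_v^+$ such that $$\tau_v\kappa=\kappa\tau_u,\quad \tau_u\lambda=\lambda\tau_v,\quad \kappa\lambda=\tau_v^k,\quad \lambda\kappa=\tau_u^k.$$
   Context: A substitution is a triple $(\tau,A,a)$: $A$ a finite alphabet, $\tau:A\to A^+$ a morphism (extended by concatenation), $a\in A$ with $\tau(a)$ starting with $a$; its fixed point $X_\tau$ is the unique sequence starting with $a$ with $\tau(X_\tau)=X_\tau$. It is primitive if some power of its matrix $M_\tau$ ($(i,j)$ entry = number of occurrences of $i$ in $\tau(j)$) is positive; then $X_\tau$ is uniformly recurrent. For a non-empty prefix $u$ of a uniformly recurrent sequence $X$, a return word on $u$ is a factor $X_{[i,j-1]}$ where $i<j$ are two successive occurrences of $u$ in $X$; there are finitely many, and $X$ factors uniquely as $X=m_0m_1m_2\cdots$ with each $m_n$ a return word on $u$. Enumerating the return words in order of first appearance in $(m_n)$ gives a bijection $\Theta_u$ from $R_u=\{1,\dots,N\}$ ($N$ the number of return words) to the set of return words, extended to a morphism $R_u^*\to A^*$, which is injective. The return substitution $\tau_u:R_u\to R_u^+$ is the unique morphism with $\Theta_u\tau_u=\tau\Theta_u$ (it exists, and $(\tau_u,R_u,1)$ is a primitive substitution). *)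

theory Defs
  imports Main "HOL-Library.Infinite_Set"
begin

text \<open>Morphisms of free monoids are given by their values on letters
  (type 'a \<Rightarrow> 'b list) and extended by concatenation.\<close>

definition ext :: "('a \<Rightarrow> 'b list) \<Rightarrow> 'a list \<Rightarrow> 'b list" where
  "ext f w = concat (map f w)"

definition substitution :: "('a \<Rightarrow> 'a list) \<Rightarrow> 'a set \<Rightarrow> 'a \<Rightarrow> bool" where
  "substitution tau A a \<longleftrightarrow> finite A \<and> a \<in> A \<and>
     (\<forall>b\<in>A. tau b \<noteq> [] \<and> set (tau b) \<subseteq> A) \<and> hd (tau a) = a"

definition subst_matrix :: "('a \<Rightarrow> 'a list) \<Rightarrow> 'a \<Rightarrow> 'a \<Rightarrow> nat" where
  "subst_matrix tau i j = count_list (tau j) i"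

definition mat_mult :: "'a set \<Rightarrow> ('a \<Rightarrow> 'a \<Rightarrow> nat) \<Rightarrow> ('a \<Rightarrow> 'a \<Rightarrow> nat) \<Rightarrow> 'a \<Rightarrow> 'a \<Rightarrow> nat" where
  "mat_mult A P Q i j = (\<Sum>l\<in>A. P i l * Q l j)"

fun mat_pow :: "'a set \<Rightarrow> ('a \<Rightarrow> 'a \<Rightarrow> nat) \<Rightarrow> nat \<Rightarrow> 'a \<Rightarrow> 'a \<Rightarrow> nat" where
  "mat_pow A M 0 = (\<lambda>i j. if i = j then 1 else 0)"
| "mat_pow A M (Suc n) = mat_mult A (mat_pow A M n) M"

definition primitive :: "('a \<Rightarrow> 'a list) \<Rightarrow> 'a set \<Rightarrow> 'a \<Rightarrow> bool" where
  "primitive tau A a \<longleftrightarrow> substitution tau A a \<and>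
     (\<exists>n\<ge>1. \<forall>i\<in>A. \<forall>j\<in>A. mat_pow A (subst_matrix tau) n i j > 0)"

text \<open>X is the fixed point of (tau, A, a): an infinite sequence over A starting
  with a with tau(X) = X, i.e. tau applied to every prefix of X is a prefix of X.\<close>

definition fixed_point :: "('a \<Rightarrow> 'a list) \<Rightarrow> 'a set \<Rightarrow> 'a \<Rightarrow> (nat \<Rightarrow> 'a) \<Rightarrow> bool" where
  "fixed_point tau A a X \<longleftrightarrow> X 0 = a \<and> (\<forall>n. X n \<in> A) \<and>
     (\<forall>n. let w = ext tau (map X [0..<n]) in \<forall>j<length w. X j = w ! j)"

definition is_prefix_of :: "'a list \<Rightarrow> (nat \<Rightarrow> 'a) \<Rightarrow> bool" where
  "is_prefix_of u X \<longleftrightarrow> u = map X [0..<length u]"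

definition occurs_at :: "'a list \<Rightarrow> (nat \<Rightarrow> 'a) \<Rightarrow> nat \<Rightarrow> bool" where
  "occurs_at u X i \<longleftrightarrow> map X [i..<i + length u] = u"

definition occ :: "(nat \<Rightarrow> 'a) \<Rightarrow> 'a list \<Rightarrow> nat \<Rightarrow> nat" where
  "occ X u n = enumerate {i. occurs_at u X i} n"

definition retw :: "(nat \<Rightarrow> 'a) \<Rightarrow> 'a list \<Rightarrow> nat \<Rightarrow> 'a list" where
  "retw X u n = map X [occ X u n..<occ X u (Suc n)]"

definition first_app :: "(nat \<Rightarrow> 'a) \<Rightarrow> 'a list \<Rightarrow> nat set" where
  "first_app X u = {n. \<forall>j<n. retw X u j \<noteq> retw X u n}"

definition R :: "(nat \<Rightarrow> 'a) \<Rightarrow> 'a list \<Rightarrow> nat set" where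
  "R X u = {1..card (range (retw X u))}"

definition Theta :: "(nat \<Rightarrow> 'a) \<Rightarrow> 'a list \<Rightarrow> nat \<Rightarrow> 'a list" where
  "Theta X u i = retw X u (sorted_list_of_set (first_app X u) ! (i - 1))"

definition ret_subst :: "('a \<Rightarrow> 'a list) \<Rightarrow> (nat \<Rightarrow> 'a) \<Rightarrow> 'a list \<Rightarrow> nat \<Rightarrow> nat list" where
  "ret_subst tau X u i =
     (THE w. set w \<subseteq> R X u \<and> ext (Theta X u) w = ext tau (Theta X u i))"

end

theory Submission
  imports Defs
begin

text \<open>
A return word on \<open>v\<close> is a segment of \<open>X\<close> between two occurrences of \<open>v\<close>, hence of \<open>u\<close>,
so it factors into return words on \<open>u\<close>; this gives \<open>\<lambda>\<close>. Conversely \<open>\<tau>\<^sup>k\<close> maps the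
segment \<open>X[p,q)\<close> onto \<open>X[L\<^sub>k p, L\<^sub>k q)\<close>, where \<open>L\<^sub>k p = |\<tau>\<^sup>k(X[0,p))|\<close>
(\<open>tau_pos k p\<close> below), and for large \<open>k\<close> the prefix \<open>\<tau>\<^sup>k(u)\<close> of \<open>X\<close> is longer than
\<open>v\<close>, so \<open>L\<^sub>k\<close> sends occurrences of \<open>u\<close> to occurrences of \<open>v\<close>; factoring \<open>\<tau>\<^sup>k\<close> of a
return word on \<open>u\<close> into return words on \<open>v\<close> gives \<open>\<kappa>\<close>. Each identity is checked after
applying \<open>\<Theta>\<close>, which is injective because the return words on \<open>u\<close> form a code: each of
them starts with \<open>u\<close>, and \<open>u\<close> occurs in \<open>r u\<close> only at positions \<open>0\<close> and \<open>|r|\<close>. Primitivity makes the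
prefixes of \<open>X\<close> uniformly recurrent, so that there are only finitely many return words.
\<close>

lemma ext_Nil [simp]: "ext f [] = []"
  by (simp add: ext_def)

lemma ext_Cons [simp]: "ext f (x # xs) = f x @ ext f xs"
  by (simp add: ext_def)

lemma ext_append [simp]: "ext f (xs @ ys) = ext f xs @ ext f ys"
  by (simp add: ext_def)

lemma ext_ext: "ext f (ext g w) = ext (\<lambda>x. ext f (g x)) w"
  by (induction w) auto

lemma set_ext: "set (ext f w) = (\<Union>x\<in>set w. set (f x))"
  by (induction w) auto

lemma ext_ext_eqI:
  assumes "\<And>i. i \<in> S \<Longrightarrow> set (f i) \<subseteq> S' \<and> ext g (f i) = h i" and "set w \<subseteq> S"
  shows "set (ext f w) \<subseteq> S' \<and> ext g (ext f w) = ext h w"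
  using assms(2) by (induction w) (auto dest: assms(1))

lemma funpow_ext:
  fixes f :: "'a \<Rightarrow> 'a list"
  shows "(ext f ^^ k) w = ext (\<lambda>x. (ext f ^^ k) [x]) w"
proof (induction k arbitrary: w)
  case 0
  then show ?case by (induction w) auto
next
  case (Suc k)
  have "(ext f ^^ Suc k) w = ext f (ext (\<lambda>x. (ext f ^^ k) [x]) w)"
    by (simp flip: Suc.IH)
  then show ?case by (simp add: ext_ext)
qed

lemma funpow_ext_append:
  fixes f :: "'a \<Rightarrow> 'a list"
  shows "(ext f ^^ k) (xs @ ys) = (ext f ^^ k) xs @ (ext f ^^ k) ys"
  by (subst (1 2 3) funpow_ext) simp

lemma funpow_ext_Nil [simp]:
  fixes f :: "'a \<Rightarrow> 'a list"
  shows "(ext f ^^ k) [] = []"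
  by (induction k) simp_all

lemma funpow_ext_ext:
  fixes f :: "'a \<Rightarrow> 'a list"
  shows "(ext f ^^ k) (ext g w) = ext (\<lambda>x. (ext f ^^ k) (g x)) w"
  by (induction w) (simp_all add: funpow_ext_append)

lemma count_list_ext:
  assumes "finite A" and "set w \<subseteq> A"
  shows "count_list (ext f w) i = (\<Sum>l\<in>A. count_list w l * count_list (f l) i)"
  using assms(2)
proof (induction w)
  case Nil
  then show ?case by simp
next
  case (Cons x w)
  have "(\<Sum>l\<in>A. count_list (x # w) l * count_list (f l) i)
      = (\<Sum>l\<in>A. (if x = l then count_list (f l) i else 0) + count_list w l * count_list (f l) i)"
    by (rule sum.cong) simp_all
  also have "\<dots> = (\<Sum>l\<in>A. (if x = l then count_list (f l) i else 0))
      + (\<Sum>l\<in>A. count_list w l * count_list (f l) i)"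
    by (rule sum.distrib)
  also have "(\<Sum>l\<in>A. (if x = l then count_list (f l) i else 0)) = count_list (f x) i"
    using assms(1) Cons.prems by (simp add: sum.delta)
  finally show ?case using Cons by simp
qed

lemma strict_mono_interval_containing:
  fixes f :: "nat \<Rightarrow> nat"
  assumes "strict_mono f" and "f 0 = 0"
  shows "\<exists>n. f n \<le> i \<and> i < f (Suc n)"
proof (induction i)
  case 0
  then show ?case using assms by (metis le_refl strict_mono_def zero_less_Suc)
next
  case (Suc i)
  then obtain n where n: "f n \<le> i" "i < f (Suc n)" by blast
  show ?case
  proof (cases "Suc i < f (Suc n)")
    case True
    then show ?thesis using n le_SucI by blast
  next
    case False
    then have "f (Suc n) = Suc i" using n by simp
    moreover have "f (Suc n) < f (Suc (Suc n))" using assms(1) by (simp add: strict_mono_def)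
    ultimately show ?thesis by (metis order_refl)
  qed
qed

lemma occurs_at_infix:
  assumes "map X [p..<q] = xs @ w @ ys"
  shows "occurs_at w X (p + length xs)"
  unfolding occurs_at_def
proof (rule nth_equalityI)
  fix t
  assume "t < length (map X [p + length xs..<p + length xs + length w])"
  then have t: "t < length w" by simp
  have len: "q - p = length xs + length w + length ys"
    using arg_cong[OF assms, of length] by simp
  have "X (p + length xs + t) = map X [p..<q] ! (length xs + t)"
    using t len by (simp add: add.assoc)
  also have "\<dots> = w ! t"
    using assms t by (simp add: nth_append)
  finally show "map X [p + length xs..<p + length xs + length w] ! t = w ! t"
    using t by simp
qed simp

locale primitive_fixed_point =
  fixes tau :: "'a \<Rightarrow> 'a list" and A :: "'a set" and a :: 'a and X :: "nat \<Rightarrow> 'a"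
  assumes primitive: "primitive tau A a" and fixed_point: "fixed_point tau A a X"
begin

definition pre :: "nat \<Rightarrow> 'a list" where
  "pre n = map X [0..<n]"

definition tau_pos :: "nat \<Rightarrow> nat \<Rightarrow> nat" where
  "tau_pos k n = length ((ext tau ^^ k) (pre n))"

lemma finite_A: "finite A" and a_in_A: "a \<in> A" and hd_tau_a: "hd (tau a) = a"
  using primitive unfolding primitive_def substitution_def by auto

lemma tau_letter: "b \<in> A \<Longrightarrow> tau b \<noteq> [] \<and> set (tau b) \<subseteq> A"
  using primitive unfolding primitive_def substitution_def by auto

lemma X_in_A: "X n \<in> A" and X_0: "X 0 = a"
  using fixed_point unfolding fixed_point_def by auto

lemma length_pre [simp]: "length (pre n) = n"
  by (simp add: pre_def)

lemma tau_pos_0 [simp]: "tau_pos k 0 = 0"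
  by (simp add: tau_pos_def pre_def)

lemma set_pre: "set (pre n) \<subseteq> A"
  using X_in_A by (auto simp: pre_def)

lemma pre_split: "p \<le> q \<Longrightarrow> pre q = pre p @ map X [p..<q]"
  unfolding pre_def by (metis map_append le_add_diff_inverse upt_add_eq_append zero_le)

lemma ext_tau_pre: "ext tau (pre n) = pre (length (ext tau (pre n)))"
proof -
  have "\<forall>j<length (ext tau (pre n)). X j = ext tau (pre n) ! j"
    using fixed_point unfolding fixed_point_def Let_def pre_def by blast
  then show ?thesis by (intro nth_equalityI) (auto simp: pre_def)
qed

lemma funpow_ext_tau_pre: "(ext tau ^^ k) (pre n) = pre (tau_pos k n)"
proof (induction k)
  case 0
  then show ?case by (simp add: tau_pos_def)
next
  case (Suc k)
  have "(ext tau ^^ Suc k) (pre n) = ext tau (pre (tau_pos k n))"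
    using Suc by simp
  also have "\<dots> = pre (length (ext tau (pre (tau_pos k n))))"
    by (rule ext_tau_pre)
  finally show ?case unfolding tau_pos_def by (metis length_pre)
qed

lemma set_ext_tau: "set w \<subseteq> A \<Longrightarrow> set (ext tau w) \<subseteq> A"
  using tau_letter by (auto simp: set_ext)

lemma length_ext_tau: "set w \<subseteq> A \<Longrightarrow> length w \<le> length (ext tau w)"
proof (induction w)
  case (Cons x w)
  then have "tau x \<noteq> []" using tau_letter by simp
  with Cons show ?case by (cases "tau x") auto
qed simp

lemma funpow_set_ext_tau: "set w \<subseteq> A \<Longrightarrow> set ((ext tau ^^ k) w) \<subseteq> A"
  by (induction k) (simp_all add: set_ext_tau)

lemma length_funpow_ext_tau: "set w \<subseteq> A \<Longrightarrow> length w \<le> length ((ext tau ^^ k) w)"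
proof (induction k arbitrary: w)
  case (Suc k)
  then show ?case
    using length_ext_tau[of "(ext tau ^^ k) w"] funpow_set_ext_tau
    by (metis funpow.simps(2) o_apply order_trans)
qed simp

lemma funpow_ext_tau_segment:
  assumes "p \<le> q"
  shows "(ext tau ^^ k) (map X [p..<q]) = map X [tau_pos k p..<tau_pos k q]"
    and "tau_pos k q = tau_pos k p + length ((ext tau ^^ k) (map X [p..<q]))"
proof -
  have e: "pre (tau_pos k q) = pre (tau_pos k p) @ (ext tau ^^ k) (map X [p..<q])"
    using arg_cong[OF pre_split[OF assms], of "ext tau ^^ k"]
    by (simp add: funpow_ext_append funpow_ext_tau_pre)
  then show "tau_pos k q = tau_pos k p + length ((ext tau ^^ k) (map X [p..<q]))"
    by (metis length_append length_pre)
  have "(ext tau ^^ k) (map X [p..<q]) = drop (tau_pos k p) (pre (tau_pos k q))"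
    using e by simp
  then show "(ext tau ^^ k) (map X [p..<q]) = map X [tau_pos k p..<tau_pos k q]"
    by (simp add: pre_def drop_map)
qed

lemma tau_pos_mono:
  assumes "p \<le> q"
  shows "tau_pos k p + (q - p) \<le> tau_pos k q"
proof -
  have "set (map X [p..<q]) \<subseteq> A" using X_in_A by auto
  from length_funpow_ext_tau[OF this, of k] funpow_ext_tau_segment(2)[OF assms, of k]
  show ?thesis by simp
qed

lemma strict_mono_tau_pos: "strict_mono (tau_pos k)"
proof (rule strict_monoI)
  fix p q :: nat
  assume "p < q"
  then show "tau_pos k p < tau_pos k q" using tau_pos_mono[of p q k] by linarith
qed

lemma occurs_at_pre_if_constant: "\<forall>n. X n = a \<Longrightarrow> occurs_at (pre m) X p"
  by (auto simp: occurs_at_def pre_def intro: nth_equalityI)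

lemma occurs_at_pre_mono:
  assumes "m \<le> n" and "occurs_at (pre n) X p"
  shows "occurs_at (pre m) X p"
proof -
  have "map X [p..<p + m] = take m (map X [p..<p + n])"
    using assms(1) by (simp add: take_map)
  also have "\<dots> = pre m"
    using assms by (simp add: occurs_at_def pre_def take_map)
  finally show ?thesis by (simp add: occurs_at_def)
qed

lemma occurs_at_tau_pos:
  assumes "occurs_at (pre m) X p"
  shows "occurs_at (pre (tau_pos k m)) X (tau_pos k p)"
proof -
  have seg: "map X [tau_pos k p..<tau_pos k (p + m)] = pre (tau_pos k m)"
    using funpow_ext_tau_segment(1)[of p "p + m" k] assms funpow_ext_tau_pre
    by (simp add: occurs_at_def)
  moreover have "tau_pos k (p + m) - tau_pos k p = tau_pos k m"
    using arg_cong[OF seg, of length] by (simp only: length_map length_upt length_pre)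
  ultimately have "tau_pos k (p + m) = tau_pos k p + tau_pos k m"
    using tau_pos_mono[of p "p + m" k] by linarith
  with seg show ?thesis by (simp add: occurs_at_def)
qed

lemma occurs_at_pre_tau_pos: "occurs_at (pre m) X p \<Longrightarrow> occurs_at (pre m) X (tau_pos k p)"
  using occurs_at_tau_pos occurs_at_pre_mono length_funpow_ext_tau[OF set_pre, of m k]
  by (metis length_pre tau_pos_def)

lemma mat_pow_subst_matrix:
  "j \<in> A \<Longrightarrow> mat_pow A (subst_matrix tau) n i j = count_list ((ext tau ^^ n) [j]) i"
proof (induction n arbitrary: i j)
  case 0
  then show ?case by simp
next
  case (Suc n)
  have "mat_pow A (subst_matrix tau) (Suc n) i j
      = (\<Sum>l\<in>A. count_list (tau j) l * count_list ((ext tau ^^ n) [l]) i)"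
    unfolding mat_pow.simps mat_mult_def
    by (rule sum.cong) (auto simp: Suc.IH subst_matrix_def)
  also have "\<dots> = count_list (ext (\<lambda>x. (ext tau ^^ n) [x]) (tau j)) i"
    by (rule count_list_ext[OF finite_A, symmetric]) (use tau_letter[OF Suc.prems] in blast)
  also have "\<dots> = count_list ((ext tau ^^ n) (tau j)) i"
    by (simp flip: funpow_ext)
  also have "(ext tau ^^ n) (tau j) = (ext tau ^^ Suc n) [j]"
    by (simp only: funpow_Suc_right comp_apply) simp
  finally show ?case .
qed

lemma letters_in_iterated_images: "\<exists>N. \<forall>b\<in>A. \<forall>i\<in>A. i \<in> set ((ext tau ^^ N) [b])"
proof -
  obtain N where N: "\<forall>i\<in>A. \<forall>j\<in>A. mat_pow A (subst_matrix tau) N i j > 0"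
    using primitive unfolding primitive_def by blast
  have "i \<in> set ((ext tau ^^ N) [b])" if "b \<in> A" "i \<in> A" for b i
    using N mat_pow_subst_matrix[of b N i] that by (metis count_list_0_iff less_irrefl)
  then show ?thesis by blast
qed

lemma constant_or_growing: "(\<forall>n. X n = a) \<or> (\<forall>m. m < length ((ext tau ^^ m) [a]))"
proof (cases "tau a = [a]")
  case True
  then have "(ext tau ^^ n) [a] = [a]" for n
    by (induction n) auto
  moreover obtain N where "\<forall>b\<in>A. \<forall>i\<in>A. i \<in> set ((ext tau ^^ N) [b])"
    using letters_in_iterated_images by blast
  ultimately have "\<forall>i\<in>A. i = a" using a_in_A by fastforce
  then show ?thesis using X_in_A by blast
next
  case False
  then obtain rest where ta: "tau a = a # rest" and "rest \<noteq> []"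
    using hd_tau_a tau_letter[OF a_in_A] by (cases "tau a") auto
  have rest: "1 \<le> length ((ext tau ^^ m) rest)" for m
    using length_funpow_ext_tau[of rest m] \<open>rest \<noteq> []\<close> tau_letter[OF a_in_A] ta
    by (cases rest) auto
  have "m < length ((ext tau ^^ m) [a])" for m
  proof (induction m)
    case (Suc m)
    have "(ext tau ^^ Suc m) [a] = (ext tau ^^ m) ([a] @ rest)"
      by (simp only: funpow_Suc_right comp_apply) (simp add: ta)
    then show ?case using Suc rest[of m] by (simp only: funpow_ext_append length_append)
  qed simp
  then show ?thesis by blast
qed

lemma tau_pos_unbounded:
  assumes "\<not> (\<forall>n. X n = a)" and "0 < n"
  shows "m < tau_pos m n"
proof -
  have pre_n: "pre n = [a] @ map X [1..<n]"
    using assms(2) X_0 by (simp add: pre_def upt_conv_Cons)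
  have "m < length ((ext tau ^^ m) [a])"
    using constant_or_growing assms(1) by blast
  then show ?thesis
    unfolding tau_pos_def pre_n funpow_ext_append by simp
qed

lemma ex_exponent_occurs_at_tau_pos:
  assumes "0 < n"
  shows "\<exists>k\<ge>1. \<forall>p. occurs_at (pre n) X p \<longrightarrow> occurs_at (pre m) X (tau_pos k p)"
proof (cases "\<forall>n. X n = a")
  case True
  then show ?thesis using occurs_at_pre_if_constant by blast
next
  case False
  have "m \<le> tau_pos (Suc m) n"
    using tau_pos_unbounded[OF False assms, of "Suc m"] by simp
  then have "occurs_at (pre m) X (tau_pos (Suc m) p)" if "occurs_at (pre n) X p" for p
    using occurs_at_pre_mono occurs_at_tau_pos[OF that] by blast
  then show ?thesis by (intro exI[of _ "Suc m"]) auto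
qed

lemma prefix_in_letter_images:
  assumes growing: "\<forall>m. m < length ((ext tau ^^ m) [a])"
  shows "\<exists>K. \<forall>b\<in>A. \<exists>xs ys. (ext tau ^^ K) [b] = xs @ pre m @ ys"
proof -
  obtain N where N: "\<forall>b\<in>A. \<forall>i\<in>A. i \<in> set ((ext tau ^^ N) [b])"
    using letters_in_iterated_images by blast
  have a_pre: "(ext tau ^^ m) [a] = pre (tau_pos m 1)"
    using funpow_ext_tau_pre[of m 1] X_0 by (simp add: pre_def)
  then have "m \<le> tau_pos m 1"
    using growing by (metis length_pre less_imp_le)
  with a_pre obtain zs where a_image: "(ext tau ^^ m) [a] = pre m @ zs"
    using pre_split by metis
  have "\<exists>xs ys. (ext tau ^^ (m + N)) [b] = xs @ pre m @ ys" if "b \<in> A" for b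
  proof -
    have "a \<in> set ((ext tau ^^ N) [b])"
      using N that a_in_A by blast
    then obtain xs ys where "(ext tau ^^ N) [b] = xs @ [a] @ ys"
      using split_list by fastforce
    then have "(ext tau ^^ (m + N)) [b] = (ext tau ^^ m) xs @ pre m @ zs @ (ext tau ^^ m) ys"
      by (simp only: funpow_add comp_apply funpow_ext_append a_image append_assoc)
    then show ?thesis by blast
  qed
  then show ?thesis by blast
qed

lemma prefix_uniformly_recurrent: "\<exists>B. \<forall>i. \<exists>j. i \<le> j \<and> j < i + B \<and> occurs_at (pre m) X j"
proof (cases "\<forall>n. X n = a")
  case True
  then show ?thesis using occurs_at_pre_if_constant by (intro exI[of _ 1]) auto
next
  case False
  then obtain K where K: "\<forall>b\<in>A. \<exists>xs ys. (ext tau ^^ K) [b] = xs @ pre m @ ys"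
    using constant_or_growing prefix_in_letter_images by blast
  define M where "M = Max ((\<lambda>b. length ((ext tau ^^ K) [b])) ` A)"
  have le_M: "length ((ext tau ^^ K) [X n]) \<le> M" for n
    unfolding M_def using finite_A X_in_A by (intro Max_ge) auto
  have block: "(ext tau ^^ K) [X n] = map X [tau_pos K n..<tau_pos K (Suc n)]"
    and block_len: "tau_pos K (Suc n) = tau_pos K n + length ((ext tau ^^ K) [X n])" for n
    using funpow_ext_tau_segment[of n "Suc n" K] by simp_all
  have "\<exists>j. i \<le> j \<and> j < i + (2 * M + 1) \<and> occurs_at (pre m) X j" for i
  proof -
    obtain n where n: "tau_pos K n \<le> i" "i < tau_pos K (Suc n)"
      using strict_mono_interval_containing[OF strict_mono_tau_pos tau_pos_0] by blast
    obtain xs ys where "(ext tau ^^ K) [X (Suc n)] = xs @ pre m @ ys"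
      using K X_in_A by blast
    then have split: "map X [tau_pos K (Suc n)..<tau_pos K (Suc (Suc n))] = xs @ pre m @ ys"
      by (simp only: block)
    have "length xs \<le> M"
      using le_M[of "Suc n"] arg_cong[OF split, of length] block_len[of "Suc n"] by simp
    moreover have "tau_pos K (Suc n) \<le> i + M"
      using n(1) block_len[of n] le_M[of n] by linarith
    moreover have "occurs_at (pre m) X (tau_pos K (Suc n) + length xs)"
      using occurs_at_infix[OF split] .
    ultimately show ?thesis
      using n(2) by (intro exI[of _ "tau_pos K (Suc n) + length xs"]) simp
  qed
  then show ?thesis by blast
qed

end

locale return_words = primitive_fixed_point +
  fixes u :: "'a list"
  assumes u_not_Nil: "u \<noteq> []" and u_prefix: "is_prefix_of u X"
begin

abbreviation ret_words :: "'a list set" where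
  "ret_words \<equiv> range (retw X u)"

lemma u_eq_pre: "u = pre (length u)"
  using u_prefix by (simp add: is_prefix_of_def pre_def)

lemma u_uniformly_recurrent: "\<exists>B. \<forall>i. \<exists>j. i \<le> j \<and> j < i + B \<and> occurs_at u X j"
  using prefix_uniformly_recurrent[of "length u"] by (simp only: u_eq_pre[symmetric])

lemma infinite_occurrences: "infinite {i. occurs_at u X i}"
  using u_uniformly_recurrent unfolding infinite_nat_iff_unbounded_le by blast

lemma occurs_at_occ: "occurs_at u X (occ X u n)"
  using enumerate_in_set[OF infinite_occurrences] by (simp add: occ_def)

lemma occ_less_iff [simp]: "occ X u m < occ X u n \<longleftrightarrow> m < n"
  using infinite_occurrences by (simp add: occ_def)

lemma occ_le_iff [simp]: "occ X u m \<le> occ X u n \<longleftrightarrow> m \<le> n"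
  using infinite_occurrences by (simp add: occ_def)

lemma ex_occ_eq: "occurs_at u X p \<Longrightarrow> \<exists>n. occ X u n = p"
  using enumerate_Ex[OF infinite_occurrences] by (simp add: occ_def)

lemma occ_Suc_le: "occurs_at u X p \<Longrightarrow> occ X u n < p \<Longrightarrow> occ X u (Suc n) \<le> p"
  by (metis ex_occ_eq occ_less_iff occ_le_iff Suc_leI)

lemma bounded_occ_gaps: "\<exists>B. \<forall>n. occ X u (Suc n) - occ X u n \<le> B"
proof -
  obtain B where B: "\<forall>i. \<exists>j. i \<le> j \<and> j < i + B \<and> occurs_at u X j"
    using u_uniformly_recurrent by blast
  have "occ X u (Suc n) - occ X u n \<le> B" for n
  proof -
    obtain j where j: "Suc (occ X u n) \<le> j" "j < Suc (occ X u n) + B" "occurs_at u X j"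
      using B by blast
    have "occ X u (Suc n) \<le> j"
      using occ_Suc_le[OF j(3)] j(1) by simp
    then show ?thesis using j(2) by linarith
  qed
  then show ?thesis by blast
qed

lemma retw_not_Nil: "retw X u n \<noteq> []"
proof -
  have "occ X u n < occ X u (Suc n)" by simp
  then show ?thesis unfolding retw_def by (auto simp del: occ_less_iff occ_le_iff)
qed

lemma Nil_notin_ret_words: "[] \<notin> ret_words"
  using retw_not_Nil by (metis rangeE)

lemma finite_ret_words: "finite ret_words"
proof -
  obtain B where B: "\<And>n. occ X u (Suc n) - occ X u n \<le> B"
    using bounded_occ_gaps by blast
  have "ret_words \<subseteq> {xs. set xs \<subseteq> A \<and> length xs \<le> B}"
    using B X_in_A by (auto simp: retw_def)
  then show ?thesis
    using finite_lists_length_le[OF finite_A] finite_subset by blast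
qed

lemma bij_betw_first_app: "bij_betw (retw X u) (first_app X u) ret_words"
proof -
  have "inj_on (retw X u) (first_app X u)"
  proof (rule inj_onI)
    fix n m
    assume n: "n \<in> first_app X u" and m: "m \<in> first_app X u" and eq: "retw X u n = retw X u m"
    show "n = m"
    proof (rule ccontr)
      assume "n \<noteq> m"
      then consider "n < m" | "m < n" by linarith
      then show False using n m eq unfolding first_app_def by cases auto
    qed
  qed
  moreover have "w \<in> retw X u ` first_app X u" if "w \<in> ret_words" for w
  proof -
    have ex: "\<exists>n. retw X u n = w" using that by blast
    define n0 where "n0 = (LEAST n. retw X u n = w)"
    have "retw X u n0 = w"
      unfolding n0_def by (rule LeastI_ex[OF ex])
    moreover have "retw X u j \<noteq> retw X u n0" if "j < n0" for j
      using not_less_Least[of j "\<lambda>n. retw X u n = w"] that \<open>retw X u n0 = w\<close> n0_def by simp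
    then have "n0 \<in> first_app X u"
      unfolding first_app_def by simp
    ultimately show ?thesis by blast
  qed
  ultimately show ?thesis
    unfolding bij_betw_def by blast
qed

lemma bij_betw_Theta: "bij_betw (Theta X u) (R X u) ret_words"
proof -
  define sl where "sl = sorted_list_of_set (first_app X u)"
  define N where "N = card ret_words"
  have finite: "finite (first_app X u)"
    using bij_betw_finite[OF bij_betw_first_app] finite_ret_words by blast
  have "length sl = N"
    using bij_betw_same_card[OF bij_betw_first_app] finite by (simp add: sl_def N_def)
  then have "bij_betw ((!) sl) {..<N} (first_app X u)"
    by (intro bij_betw_nth) (use finite in \<open>auto simp: sl_def\<close>)
  moreover have "bij_betw (\<lambda>i. i - 1) {1..N} {..<N}"
    by (rule bij_betw_byWitness[where f'=Suc]) auto
  ultimately have "bij_betw (retw X u \<circ> ((!) sl) \<circ> (\<lambda>i. i - 1)) {1..N} ret_words"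
    using bij_betw_first_app by (blast intro: bij_betw_trans)
  moreover have "retw X u \<circ> ((!) sl) \<circ> (\<lambda>i. i - 1) = Theta X u"
    by (rule ext) (simp add: Theta_def sl_def)
  ultimately show ?thesis
    by (simp add: R_def N_def)
qed

lemma retw_append_u: "retw X u n @ u = map X [occ X u n..<occ X u (Suc n) + length u]"
proof -
  have "u = map X [occ X u (Suc n)..<occ X u (Suc n) + length u]"
    using occurs_at_occ[of "Suc n"] by (simp add: occurs_at_def)
  then show ?thesis
    unfolding retw_def by (metis less_imp_le_nat lessI map_append occ_less_iff upt_add_eq_append)
qed

lemma take_ret_word_append_u:
  assumes "r \<in> ret_words"
  shows "take (length u) (r @ u) = u"
proof -
  obtain n where r: "r = retw X u n" using assms by blast
  have "take (length u) (r @ u) = map X [occ X u n..<occ X u n + length u]"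
    unfolding r retw_append_u using occ_le_iff[of n "Suc n"] by (simp add: take_map)
  then show ?thesis using occurs_at_occ[of n] by (simp add: occurs_at_def)
qed

lemma occurs_in_ret_word_append_u:
  assumes "r \<in> ret_words" and "t \<le> length r" and "take (length u) (drop t (r @ u)) = u"
  shows "t = 0 \<or> t = length r"
proof -
  obtain n where r: "r = retw X u n" using assms(1) by blast
  define p where "p = occ X u n"
  define q where "q = occ X u (Suc n)"
  have pq: "p < q" by (simp add: p_def q_def)
  have len: "length r = q - p" by (simp add: r retw_def p_def q_def)
  have "take (length u) (drop t (r @ u)) = map X [p + t..<p + t + length u]"
    unfolding r retw_append_u p_def[symmetric] q_def[symmetric]
    using assms(2) len pq by (simp add: take_map drop_map)
  then have "occurs_at u X (p + t)"
    using assms(3) by (simp add: occurs_at_def)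
  then have "t = 0 \<or> q \<le> p + t"
    using occ_Suc_le[of "p + t" n] by (auto simp: p_def q_def)
  then show ?thesis using assms(2) len by arith
qed

lemma ret_words_suffix_eq:
  assumes "r \<in> ret_words" "r' \<in> ret_words" "s @ r = s' @ r'" "length r \<le> length r'"
  shows "r = r'"
proof -
  obtain us where "s = s' @ us \<and> us @ r = r' \<or> s @ us = s' \<and> r = us @ r'"
    using append_eq_append_conv2 assms(3) by blast
  then show ?thesis
  proof
    assume "s = s' @ us \<and> us @ r = r'"
    then have r': "r' = us @ r" by simp
    have "drop (length us) (r' @ u) = r @ u"
      unfolding r' by simp
    then have "take (length u) (drop (length us) (r' @ u)) = u"
      using take_ret_word_append_u[OF assms(1)] by simp
    moreover have "length us \<le> length r'"
      unfolding r' by simp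
    ultimately have "length us = 0 \<or> length us = length r'"
      using occurs_in_ret_word_append_u[OF assms(2)] by blast
    moreover have "r \<noteq> []"
      using assms(1) retw_not_Nil by auto
    ultimately show ?thesis
      using r' by auto
  next
    assume "s @ us = s' \<and> r = us @ r'"
    then show ?thesis using assms(4) by simp
  qed
qed

lemma concat_inj_ret_words:
  "set xs \<subseteq> ret_words \<Longrightarrow> set ys \<subseteq> ret_words \<Longrightarrow> concat xs = concat ys \<Longrightarrow> xs = ys"
proof (induction xs arbitrary: ys rule: rev_induct)
  case Nil
  then show ?case using Nil_notin_ret_words by (cases ys) auto
next
  case (snoc r xs)
  have "r \<noteq> []" using snoc.prems(1) retw_not_Nil by auto
  then have "ys \<noteq> []" using snoc.prems(3) by auto
  then obtain ys' r' where ys: "ys = ys' @ [r']"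
    by (cases ys rule: rev_exhaust) auto
  have eq: "concat xs @ r = concat ys' @ r'"
    using snoc.prems ys by simp
  have "r \<in> ret_words" "r' \<in> ret_words"
    using snoc.prems ys by auto
  then have "r = r'"
    using ret_words_suffix_eq eq by (metis nle_le)
  moreover have "xs = ys'"
    using snoc.IH[of ys'] snoc.prems eq ys \<open>r = r'\<close> by simp
  ultimately show ?case using ys by simp
qed

lemma ext_Theta_inj:
  assumes "set w \<subseteq> R X u" "set w' \<subseteq> R X u" "ext (Theta X u) w = ext (Theta X u) w'"
  shows "w = w'"
proof -
  have "set (map (Theta X u) w) \<subseteq> ret_words" "set (map (Theta X u) w') \<subseteq> ret_words"
    using assms(1,2) bij_betw_apply[OF bij_betw_Theta] by auto
  then have "map (Theta X u) w = map (Theta X u) w'"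
    using concat_inj_ret_words assms(3) unfolding ext_def by blast
  moreover have "inj_on (Theta X u) (set w \<union> set w')"
    using bij_betw_Theta assms unfolding bij_betw_def by (meson inj_on_subset le_sup_iff)
  ultimately show ?thesis using inj_on_map_eq_map by blast
qed

definition occ_segment :: "'a list \<Rightarrow> bool" where
  "occ_segment w \<longleftrightarrow> (\<exists>p q. p < q \<and> occurs_at u X p \<and> occurs_at u X q \<and> w = map X [p..<q])"

lemma occ_segment_factor:
  assumes "occ_segment w"
  shows "\<exists>ws. ws \<noteq> [] \<and> set ws \<subseteq> R X u \<and> ext (Theta X u) ws = w"
proof -
  obtain p q where pq: "p < q" "occurs_at u X p" "occurs_at u X q" "w = map X [p..<q]"
    using assms unfolding occ_segment_def by blast
  obtain n m where nm: "occ X u n = p" "occ X u m = q"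
    using ex_occ_eq pq by metis
  then have "n < m" using pq(1) occ_less_iff by blast
  have "\<forall>j. \<exists>i. i \<in> R X u \<and> Theta X u i = retw X u j"
    using bij_betw_Theta unfolding bij_betw_def by (metis (mono_tags, lifting) image_iff rangeI)
  then obtain idx where idx: "\<And>j. idx j \<in> R X u \<and> Theta X u (idx j) = retw X u j"
    by metis
  have "map X [occ X u n..<occ X u m'] = ext (Theta X u) (map idx [n..<m'])" if "n \<le> m'" for m'
    using that
  proof (induction m')
    case (Suc m')
    show ?case
    proof (cases "n = Suc m'")
      case False
      then have le: "n \<le> m'" using Suc by simp
      have "map X [occ X u n..<occ X u (Suc m')] = map X [occ X u n..<occ X u m'] @ retw X u m'"
        unfolding retw_def using le
        by (metis map_append occ_le_iff upt_add_eq_append lessI less_imp_le_nat nat_le_iff_add)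
      then show ?thesis using Suc.IH[OF le] le idx by simp
    qed simp
  qed simp
  then show ?thesis
    using \<open>n < m\<close> nm pq(4) idx by (intro exI[of _ "map idx [n..<m]"]) auto
qed

lemma Theta_occ_segment:
  assumes "i \<in> R X u"
  shows "occ_segment (Theta X u i)"
proof -
  obtain n where "Theta X u i = retw X u n"
    using bij_betw_apply[OF bij_betw_Theta assms] by blast
  then show ?thesis
    unfolding occ_segment_def retw_def using occurs_at_occ occ_less_iff lessI by blast
qed

lemma ex_Theta_coding:
  assumes "\<And>i. i \<in> I \<Longrightarrow> occ_segment (f i)"
  shows "\<exists>g. \<forall>i\<in>I. g i \<noteq> [] \<and> set (g i) \<subseteq> R X u \<and> ext (Theta X u) (g i) = f i"
  by (rule bchoice) (use occ_segment_factor assms in blast)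

lemma occ_segment_funpow_image:
  assumes "\<forall>p. occurs_at w X p \<longrightarrow> occurs_at u X (tau_pos k p)"
    and "p < q" "occurs_at w X p" "occurs_at w X q"
  shows "occ_segment ((ext tau ^^ k) (map X [p..<q]))"
  unfolding occ_segment_def funpow_ext_tau_segment(1)[OF less_imp_le[OF assms(2)]]
  using assms strict_monoD[OF strict_mono_tau_pos] by blast

lemma occurs_at_u_tau_pos: "occurs_at u X p \<Longrightarrow> occurs_at u X (tau_pos k p)"
  using occurs_at_pre_tau_pos[of "length u" p k] by (simp only: u_eq_pre[symmetric])

lemma ret_subst_spec:
  assumes "i \<in> R X u"
  shows "set (ret_subst tau X u i) \<subseteq> R X u
    \<and> ext (Theta X u) (ret_subst tau X u i) = ext tau (Theta X u i)"
proof -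
  obtain p q where pq: "p < q" "occurs_at u X p" "occurs_at u X q" "Theta X u i = map X [p..<q]"
    using Theta_occ_segment[OF assms] unfolding occ_segment_def by blast
  have "occ_segment ((ext tau ^^ 1) (map X [p..<q]))"
    using occ_segment_funpow_image[of u 1, OF _ pq(1-3)] occurs_at_u_tau_pos by blast
  then obtain ws where ws: "set ws \<subseteq> R X u" "ext (Theta X u) ws = ext tau (Theta X u i)"
    using occ_segment_factor pq(4) by auto
  have "\<exists>!ws. set ws \<subseteq> R X u \<and> ext (Theta X u) ws = ext tau (Theta X u i)"
    by (rule ex1I[of _ ws]) (use ws ext_Theta_inj in auto)
  then show ?thesis
    unfolding ret_subst_def by (rule theI')
qed

lemma funpow_ext_ret_subst:
  assumes "set w \<subseteq> R X u"
  shows "set ((ext (ret_subst tau X u) ^^ k) w) \<subseteq> R X u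
    \<and> ext (Theta X u) ((ext (ret_subst tau X u) ^^ k) w) = (ext tau ^^ k) (ext (Theta X u) w)"
proof (induction k)
  case (Suc k)
  have "set (ext (ret_subst tau X u) w') \<subseteq> R X u
    \<and> ext (Theta X u) (ext (ret_subst tau X u) w') = ext tau (ext (Theta X u) w')"
    if "set w' \<subseteq> R X u" for w'
    using ext_ext_eqI[OF ret_subst_spec that] by (simp add: ext_ext)
  then show ?case using Suc by simp
qed (use assms in simp)

end

locale prefix_pair = U: return_words tau A a X u + V: return_words tau A a X v
  for tau A a X u v +
  assumes shorter: "length u \<le> length v"
begin

lemma occurs_at_u_if_occurs_at_v: "occurs_at v X p \<Longrightarrow> occurs_at u X p"
  using U.occurs_at_pre_mono[OF shorter, of p]
  by (simp only: U.u_eq_pre[symmetric] V.u_eq_pre[symmetric])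

lemma ex_lam:
  "\<exists>lam. \<forall>i\<in>R X v. lam i \<noteq> [] \<and> set (lam i) \<subseteq> R X u \<and> ext (Theta X u) (lam i) = Theta X v i"
proof (rule U.ex_Theta_coding)
  fix i
  assume "i \<in> R X v"
  then show "U.occ_segment (Theta X v i)"
    using V.Theta_occ_segment occurs_at_u_if_occurs_at_v
    unfolding U.occ_segment_def V.occ_segment_def by metis
qed

lemma ex_exponent_occurs_at_v:
  "\<exists>k\<ge>1. \<forall>p. occurs_at u X p \<longrightarrow> occurs_at v X (U.tau_pos k p)"
proof -
  have "0 < length u"
    using U.u_not_Nil by simp
  from U.ex_exponent_occurs_at_tau_pos[OF this, of "length v"]
  show ?thesis
    by (simp only: U.u_eq_pre[symmetric] V.u_eq_pre[symmetric])
qed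

lemma ex_kap:
  "\<exists>k\<ge>1. \<exists>kap. \<forall>i\<in>R X u. kap i \<noteq> [] \<and> set (kap i) \<subseteq> R X v
     \<and> ext (Theta X v) (kap i) = (ext tau ^^ k) (Theta X u i)"
proof -
  obtain k where k: "k \<ge> 1" "\<forall>p. occurs_at u X p \<longrightarrow> occurs_at v X (U.tau_pos k p)"
    using ex_exponent_occurs_at_v by blast
  have "V.occ_segment ((ext tau ^^ k) (Theta X u i))" if i: "i \<in> R X u" for i
  proof -
    obtain p q where pq: "p < q" "occurs_at u X p" "occurs_at u X q" "Theta X u i = map X [p..<q]"
      using U.Theta_occ_segment[OF i] unfolding U.occ_segment_def by blast
    show ?thesis
      unfolding pq(4) by (rule V.occ_segment_funpow_image[OF k(2) pq(1-3)])
  qed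
  then obtain kap where "\<forall>i\<in>R X u. kap i \<noteq> [] \<and> set (kap i) \<subseteq> R X v
     \<and> ext (Theta X v) (kap i) = (ext tau ^^ k) (Theta X u i)"
    using V.ex_Theta_coding[of "R X u" "\<lambda>i. (ext tau ^^ k) (Theta X u i)"] by blast
  with k(1) show ?thesis by blast
qed

end

locale return_conjugacy = U: return_words tau A a X u + V: return_words tau A a X v
  for tau A a X u v +
  fixes k :: nat and lam kap :: "nat \<Rightarrow> nat list"
  assumes lam: "\<And>i. i \<in> R X v \<Longrightarrow> set (lam i) \<subseteq> R X u \<and> ext (Theta X u) (lam i) = Theta X v i"
    and kap: "\<And>i. i \<in> R X u \<Longrightarrow>
      set (kap i) \<subseteq> R X v \<and> ext (Theta X v) (kap i) = (ext tau ^^ k) (Theta X u i)"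
begin

lemma ext_lam:
  "set w \<subseteq> R X v \<Longrightarrow> set (ext lam w) \<subseteq> R X u \<and> ext (Theta X u) (ext lam w) = ext (Theta X v) w"
  by (rule ext_ext_eqI[OF lam])

lemma ext_kap:
  "set w \<subseteq> R X u \<Longrightarrow>
    set (ext kap w) \<subseteq> R X v \<and> ext (Theta X v) (ext kap w) = (ext tau ^^ k) (ext (Theta X u) w)"
  using ext_ext_eqI[OF kap] by (simp add: funpow_ext_ext)

lemma ret_subst_kap:
  assumes i: "i \<in> R X u"
  shows "ext (ret_subst tau X v) (kap i) = ext kap (ret_subst tau X u i)"
proof (rule V.ext_Theta_inj)
  have kap_i: "set (kap i) \<subseteq> R X v" and ret_i: "set (ret_subst tau X u i) \<subseteq> R X u"
    using kap[OF i] U.ret_subst_spec[OF i] by blast+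
  show "set (ext (ret_subst tau X v) (kap i)) \<subseteq> R X v"
    using V.funpow_ext_ret_subst[OF kap_i, of 1] by simp
  show "set (ext kap (ret_subst tau X u i)) \<subseteq> R X v"
    using ext_kap[OF ret_i] by blast
  have "ext (Theta X v) (ext (ret_subst tau X v) (kap i)) = ext tau ((ext tau ^^ k) (Theta X u i))"
    using V.funpow_ext_ret_subst[OF kap_i, of 1] kap[OF i] by simp
  also have "\<dots> = (ext tau ^^ k) (ext tau (Theta X u i))"
    by (rule funpow_swap1)
  also have "\<dots> = ext (Theta X v) (ext kap (ret_subst tau X u i))"
    using ext_kap[OF ret_i] U.ret_subst_spec[OF i] by simp
  finally show "ext (Theta X v) (ext (ret_subst tau X v) (kap i))
    = ext (Theta X v) (ext kap (ret_subst tau X u i))" .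
qed

lemma ret_subst_lam:
  assumes i: "i \<in> R X v"
  shows "ext (ret_subst tau X u) (lam i) = ext lam (ret_subst tau X v i)"
proof (rule U.ext_Theta_inj)
  have lam_i: "set (lam i) \<subseteq> R X u" and ret_i: "set (ret_subst tau X v i) \<subseteq> R X v"
    using lam[OF i] V.ret_subst_spec[OF i] by blast+
  show "set (ext (ret_subst tau X u) (lam i)) \<subseteq> R X u"
    using U.funpow_ext_ret_subst[OF lam_i, of 1] by simp
  show "set (ext lam (ret_subst tau X v i)) \<subseteq> R X u"
    using ext_lam[OF ret_i] by blast
  have "ext (Theta X u) (ext (ret_subst tau X u) (lam i)) = ext tau (Theta X v i)"
    using U.funpow_ext_ret_subst[OF lam_i, of 1] lam[OF i] by simp
  also have "\<dots> = ext (Theta X u) (ext lam (ret_subst tau X v i))"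
    using ext_lam[OF ret_i] V.ret_subst_spec[OF i] by simp
  finally show "ext (Theta X u) (ext (ret_subst tau X u) (lam i))
    = ext (Theta X u) (ext lam (ret_subst tau X v i))" .
qed

lemma kap_lam:
  assumes i: "i \<in> R X v"
  shows "ext kap (lam i) = (ext (ret_subst tau X v) ^^ k) [i]"
proof (rule V.ext_Theta_inj)
  have lam_i: "set (lam i) \<subseteq> R X u" and i': "set [i] \<subseteq> R X v"
    using lam[OF i] i by auto
  show "set (ext kap (lam i)) \<subseteq> R X v"
    using ext_kap[OF lam_i] by blast
  show "set ((ext (ret_subst tau X v) ^^ k) [i]) \<subseteq> R X v"
    using V.funpow_ext_ret_subst[OF i'] by blast
  show "ext (Theta X v) (ext kap (lam i)) = ext (Theta X v) ((ext (ret_subst tau X v) ^^ k) [i])"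
    using ext_kap[OF lam_i] lam[OF i] V.funpow_ext_ret_subst[OF i', of k] by simp
qed

lemma lam_kap:
  assumes i: "i \<in> R X u"
  shows "ext lam (kap i) = (ext (ret_subst tau X u) ^^ k) [i]"
proof (rule U.ext_Theta_inj)
  have kap_i: "set (kap i) \<subseteq> R X v" and i': "set [i] \<subseteq> R X u"
    using kap[OF i] i by auto
  show "set (ext lam (kap i)) \<subseteq> R X u"
    using ext_lam[OF kap_i] by blast
  show "set ((ext (ret_subst tau X u) ^^ k) [i]) \<subseteq> R X u"
    using U.funpow_ext_ret_subst[OF i'] by blast
  show "ext (Theta X u) (ext lam (kap i)) = ext (Theta X u) ((ext (ret_subst tau X u) ^^ k) [i])"
    using ext_lam[OF kap_i] kap[OF i] U.funpow_ext_ret_subst[OF i', of k] by simp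
qed

end

theorem proposition8:
  fixes tau :: "'a \<Rightarrow> 'a list" and A :: "'a set" and a :: 'a
    and X :: "nat \<Rightarrow> 'a" and u v :: "'a list"
  assumes "primitive tau A a"
    and "fixed_point tau A a X"
    and "u \<noteq> []" and "is_prefix_of u X"
    and "v \<noteq> []" and "is_prefix_of v X"
    and "length u < length v"
  shows "\<exists>(k::nat) (lam :: nat \<Rightarrow> nat list) (kap :: nat \<Rightarrow> nat list).
           k \<ge> 1 \<and>
           (\<forall>i\<in>R X v. lam i \<noteq> [] \<and> set (lam i) \<subseteq> R X u) \<and>
           (\<forall>i\<in>R X u. kap i \<noteq> [] \<and> set (kap i) \<subseteq> R X v) \<and>
           (\<forall>i\<in>R X u. ext (ret_subst tau X v) (kap i) = ext kap (ret_subst tau X u i)) \<and>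
           (\<forall>i\<in>R X v. ext (ret_subst tau X u) (lam i) = ext lam (ret_subst tau X v i)) \<and>
           (\<forall>i\<in>R X v. ext kap (lam i) = (ext (ret_subst tau X v) ^^ k) [i]) \<and>
           (\<forall>i\<in>R X u. ext lam (kap i) = (ext (ret_subst tau X u) ^^ k) [i])"
proof -
  interpret prefix_pair tau A a X u v
    by unfold_locales (use assms in simp_all)
  obtain lam where lam_spec: "\<forall>i\<in>R X v. lam i \<noteq> [] \<and> set (lam i) \<subseteq> R X u
      \<and> ext (Theta X u) (lam i) = Theta X v i"
    using ex_lam by blast
  obtain k kap where "k \<ge> 1" and kap_spec: "\<forall>i\<in>R X u. kap i \<noteq> [] \<and> set (kap i) \<subseteq> R X v
      \<and> ext (Theta X v) (kap i) = (ext tau ^^ k) (Theta X u i)"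
    using ex_kap by blast
  interpret return_conjugacy tau A a X u v k lam kap
    by unfold_locales (use lam_spec kap_spec in blast)+
  show ?thesis
    by (intro exI[of _ k] exI[of _ lam] exI[of _ kap] conjI ballI)
      (use \<open>k \<ge> 1\<close> lam_spec kap_spec ret_subst_kap ret_subst_lam kap_lam lam_kap in simp_all)
qed

end
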